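(* Let $R$ be a commutative ring and $M$ a semisimple $R$-module. Let $B$ be the set of all maximal second submodules of $M$, and assume that $Ann(M)\neq\bigcap_{K\in B\setminus\{N\}}Ann(K)$ for every $N\in B$. Then the following are equivalent: (1) $M$ is a multiplication module; (2) every PS-hollow submodule of $M$ is simple; (3) every second submodule of $M$ is simple; (4) $M$ is a comultiplication module.
   Context: A submodule $N\neq 0$ of $M$ is second iff for every ideal $I\leq R$, $IN=N$ or $IN=0$; maximal second submodules are those maximal w.r.t. inclusion among second submodules. An $R$-submodule $N\leq M$ is PS-hollow iff for every ideal $I\leq R$ and every submodule $L\leq M$: $N\subseteq IM+L$ implies $N\subseteq IM$ or $N\subseteq L$. $M$ is a multiplication module iff every submodule of $M$ is of the form $IM$ for some ideal $I\leq R$. $M$ is a comultiplication module iff $K=(0:_M(0:_R K))$ for every submodule $K\leq M$. $Ann(K)=(0:_R K)$. *)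

theory Defs
  imports Main "HOL.Modules"
begin

text \<open>Modules over a commutative ring 'r are modelled by the library locale
  module scale, with M the whole carrier type 'm.\<close>

definition is_ideal :: "'r::comm_ring_1 set \<Rightarrow> bool" where
  "is_ideal I \<longleftrightarrow> 0 \<in> I \<and> (\<forall>x\<in>I. \<forall>y\<in>I. x + y \<in> I) \<and> (\<forall>r. \<forall>x\<in>I. r * x \<in> I)"

definition ann :: "('r::comm_ring_1 \<Rightarrow> 'm::ab_group_add \<Rightarrow> 'm) \<Rightarrow> 'm set \<Rightarrow> 'r set" where
  "ann scale K = {r. \<forall>x\<in>K. scale r x = 0}"

definition ann_M :: "('r::comm_ring_1 \<Rightarrow> 'm::ab_group_add \<Rightarrow> 'm) \<Rightarrow> 'r set \<Rightarrow> 'm set" where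
  "ann_M scale J = {x. \<forall>r\<in>J. scale r x = 0}"

definition ideal_mult :: "('r::comm_ring_1 \<Rightarrow> 'm::ab_group_add \<Rightarrow> 'm) \<Rightarrow> 'r set \<Rightarrow> 'm set \<Rightarrow> 'm set" where
  "ideal_mult scale I N = module.span scale {scale a n | a n. a \<in> I \<and> n \<in> N}"

definition second_sub :: "('r::comm_ring_1 \<Rightarrow> 'm::ab_group_add \<Rightarrow> 'm) \<Rightarrow> 'm set \<Rightarrow> bool" where
  "second_sub scale N \<longleftrightarrow> module.subspace scale N \<and> N \<noteq> {0} \<and>
     (\<forall>I. is_ideal I \<longrightarrow> ideal_mult scale I N = N \<or> ideal_mult scale I N = {0})"

definition max_second_sub :: "('r::comm_ring_1 \<Rightarrow> 'm::ab_group_add \<Rightarrow> 'm) \<Rightarrow> 'm set \<Rightarrow> bool" where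
  "max_second_sub scale N \<longleftrightarrow> second_sub scale N \<and>
     (\<forall>K. second_sub scale K \<and> N \<subseteq> K \<longrightarrow> K = N)"

definition simple_sub :: "('r::comm_ring_1 \<Rightarrow> 'm::ab_group_add \<Rightarrow> 'm) \<Rightarrow> 'm set \<Rightarrow> bool" where
  "simple_sub scale N \<longleftrightarrow> module.subspace scale N \<and> N \<noteq> {0} \<and>
     (\<forall>L. module.subspace scale L \<and> L \<subseteq> N \<longrightarrow> L = {0} \<or> L = N)"

definition ps_hollow :: "('r::comm_ring_1 \<Rightarrow> 'm::ab_group_add \<Rightarrow> 'm) \<Rightarrow> 'm set \<Rightarrow> bool" where
  "ps_hollow scale N \<longleftrightarrow> module.subspace scale N \<and> N \<noteq> {0} \<and>
     (\<forall>I L. is_ideal I \<longrightarrow> module.subspace scale L \<longrightarrow>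
        N \<subseteq> {x + y | x y. x \<in> ideal_mult scale I UNIV \<and> y \<in> L} \<longrightarrow>
        N \<subseteq> ideal_mult scale I UNIV \<or> N \<subseteq> L)"

definition multiplication_module :: "('r::comm_ring_1 \<Rightarrow> 'm::ab_group_add \<Rightarrow> 'm) \<Rightarrow> bool" where
  "multiplication_module scale \<longleftrightarrow>
     (\<forall>N. module.subspace scale N \<longrightarrow> (\<exists>I. is_ideal I \<and> N = ideal_mult scale I UNIV))"

definition comultiplication_module :: "('r::comm_ring_1 \<Rightarrow> 'm::ab_group_add \<Rightarrow> 'm) \<Rightarrow> bool" where
  "comultiplication_module scale \<longleftrightarrow>
     (\<forall>K. module.subspace scale K \<longrightarrow> K = ann_M scale (ann scale K))"

definition semisimple_module :: "('r::comm_ring_1 \<Rightarrow> 'm::ab_group_add \<Rightarrow> 'm) \<Rightarrow> bool" where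
  "semisimple_module scale \<longleftrightarrow>
     (\<forall>N. module.subspace scale N \<longrightarrow>
        (\<exists>L. module.subspace scale L \<and> N \<inter> L = {0} \<and> {x + y | x y. x \<in> N \<and> y \<in> L} = UNIV))"

end

theory Submission
  imports Defs
begin

(* For a maximal ideal P write M[P] = (0 :_M P), the P-isotypic component of M.
  Every nonzero cyclic submodule Rx of the semisimple module M contains a nonzero element
  of some M[P]; hence M and each of its submodules are spanned by their intersections with
  the components, and M[P] \<inter> PM = 0 because PM lies in a complement of any cyclic submodule
  of M[P]. It follows that the second submodules, and equally the PS-hollow submodules,
  are exactly the nonzero submodules of the components, and that the maximal second
  submodules are the nonzero components. Multiplication or comultiplication forces each
  component to be simple. Conversely, the annihilator hypothesis supplies for each nonzero
  M[P] a scalar r \<notin> P killing every other component; when all components are simple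
  this recovers any submodule N as IM, with I the annihilator of the components not
  contained in N, and as (0 :_M Ann N). *)

text \<open>Maximality of P is expressed as invertibility modulo P of every r \<notin> P.\<close>

definition maximal_ideal :: "'r::comm_ring_1 set \<Rightarrow> bool" where
  "maximal_ideal P \<longleftrightarrow> is_ideal P \<and> 1 \<notin> P \<and> (\<forall>r. r \<notin> P \<longrightarrow> (\<exists>s. 1 - r * s \<in> P))"

lemma is_ideal_Union_chain:
  fixes C :: "'r::comm_ring_1 set set"
  assumes "C \<noteq> {}" and ideals: "\<forall>J\<in>C. is_ideal J" and "chain\<^sub>\<subseteq> C"
  shows "is_ideal (\<Union>C)"
  unfolding is_ideal_def
proof (intro conjI ballI allI)
  show "0 \<in> \<Union>C"
    using assms(1) ideals unfolding is_ideal_def by blast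
next
  fix x y assume "x \<in> \<Union>C" "y \<in> \<Union>C"
  then obtain X Y where XY: "X \<in> C" "Y \<in> C" "x \<in> X" "y \<in> Y" by blast
  with assms(3) have "X \<subseteq> Y \<or> Y \<subseteq> X" by (auto simp: chain_subset_def)
  with XY obtain Z where "Z \<in> C" "x \<in> Z" "y \<in> Z" by blast
  with ideals show "x + y \<in> \<Union>C" unfolding is_ideal_def by blast
next
  fix r x assume "x \<in> \<Union>C"
  with ideals show "r * x \<in> \<Union>C" unfolding is_ideal_def by blast
qed

lemma is_ideal_add_multiples:
  fixes P :: "'r::comm_ring_1 set"
  assumes P: "is_ideal P"
  shows "is_ideal {p + r * s | p s. p \<in> P}"
  unfolding is_ideal_def
proof (intro conjI ballI allI)
  have "0 = 0 + r * 0" "(0::'r) \<in> P" using P by (auto simp: is_ideal_def)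
  then show "0 \<in> {p + r * s | p s. p \<in> P}" by blast
next
  fix x y assume "x \<in> {p + r * s | p s. p \<in> P}" "y \<in> {p + r * s | p s. p \<in> P}"
  then obtain p s p' s' where ps: "x = p + r * s" "y = p' + r * s'" "p \<in> P" "p' \<in> P" by blast
  then have "x + y = (p + p') + r * (s + s')" by (simp add: algebra_simps)
  moreover have "p + p' \<in> P" using P ps(3,4) unfolding is_ideal_def by blast
  ultimately show "x + y \<in> {p + r * s | p s. p \<in> P}" by blast
next
  fix t x assume "x \<in> {p + r * s | p s. p \<in> P}"
  then obtain p s where ps: "x = p + r * s" "p \<in> P" by blast
  then have "t * x = t * p + r * (t * s)" by (simp add: algebra_simps)
  moreover have "t * p \<in> P" using P ps(2) unfolding is_ideal_def by blast
  ultimately show "t * x \<in> {p + r * s | p s. p \<in> P}" by blast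
qed

lemma exists_maximal_ideal_superset:
  fixes J :: "'r::comm_ring_1 set"
  assumes "is_ideal J" and "1 \<notin> J"
  shows "\<exists>P. maximal_ideal P \<and> J \<subseteq> P"
proof -
  define A where "A = {I. is_ideal I \<and> J \<subseteq> I \<and> (1::'r) \<notin> I}"
  have "\<exists>U\<in>A. \<forall>X\<in>C. X \<subseteq> U" if "C \<in> chains A" for C
  proof (cases "C = {}")
    case True
    with assms show ?thesis by (auto simp: A_def)
  next
    case False
    with that have "\<Union>C \<in> A"
      by (auto simp: A_def chains_def intro!: is_ideal_Union_chain)
    then show ?thesis by blast
  qed
  then obtain P where "P \<in> A" and P_max: "\<forall>X\<in>A. P \<subseteq> X \<longrightarrow> X = P"
    using Zorn_Lemma2[of A] by blast
  then have P: "is_ideal P" "J \<subseteq> P" "1 \<notin> P" by (auto simp: A_def)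
  have "\<exists>s. 1 - r * s \<in> P" if "r \<notin> P" for r
  proof -
    let ?P' = "{p + r * s | p s. p \<in> P}"
    have "p = p + r * 0" "r = 0 + r * 1" "(0::'r) \<in> P" for p
      using P(1) by (auto simp: is_ideal_def)
    then have "P \<subseteq> ?P'" "r \<in> ?P'" by blast+
    with P_max that have "?P' \<notin> A" by blast
    moreover have "is_ideal ?P'" using P(1) by (rule is_ideal_add_multiples)
    ultimately have "1 \<in> ?P'" using \<open>P \<subseteq> ?P'\<close> P(2) by (auto simp: A_def)
    then obtain p s where "p \<in> P" "1 = p + r * s" by blast
    then show ?thesis by (metis add_diff_cancel_right')
  qed
  with P show ?thesis unfolding maximal_ideal_def by blast
qed

context module
begin

lemma subspace_ann_M: "subspace (ann_M scale J)"
  unfolding subspace_def ann_M_def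
  by (auto simp: scale_right_distrib) (metis mult.commute scale_scale scale_zero_right)

lemma is_ideal_ann: "is_ideal (ann scale K)"
  unfolding is_ideal_def ann_def
  by (auto simp: scale_left_distrib simp flip: scale_scale)

lemma ann_span: "ann scale (span S) = ann scale S"
proof
  show "ann scale (span S) \<subseteq> ann scale S"
    using span_superset by (auto simp: ann_def)
  show "ann scale S \<subseteq> ann scale (span S)"
  proof
    fix r assume "r \<in> ann scale S"
    then have "span S \<subseteq> ann_M scale {r}"
      by (intro span_minimal subspace_ann_M) (auto simp: ann_def ann_M_def)
    then show "r \<in> ann scale (span S)" by (auto simp: ann_def ann_M_def)
  qed
qed

lemma subspace_scale_multiples:
  assumes P: "is_ideal P"
  shows "subspace {p *s x | p. p \<in> P}"
proof (rule subspaceI)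
  have "0 = 0 *s x" "(0::'a) \<in> P" using P by (auto simp: is_ideal_def)
  then show "0 \<in> {p *s x | p. p \<in> P}" by blast
next
  fix u v assume "u \<in> {p *s x | p. p \<in> P}" "v \<in> {p *s x | p. p \<in> P}"
  then obtain p q where pq: "u = p *s x" "v = q *s x" "p \<in> P" "q \<in> P" by blast
  then have "u + v = (p + q) *s x" by (simp add: scale_left_distrib)
  moreover have "p + q \<in> P" using P pq(3,4) by (simp add: is_ideal_def)
  ultimately show "u + v \<in> {p *s x | p. p \<in> P}" by blast
next
  fix c u assume "u \<in> {p *s x | p. p \<in> P}"
  then obtain p where p: "u = p *s x" "p \<in> P" by blast
  then have "c *s u = (c * p) *s x" by simp
  moreover have "c * p \<in> P" using P p(2) by (simp add: is_ideal_def)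
  ultimately show "c *s u \<in> {p *s x | p. p \<in> P}" by blast
qed

lemma subspace_ideal_mult [iff]: "subspace (ideal_mult scale I N)"
  by (simp add: ideal_mult_def)

lemma ideal_mult_subset: "subspace N \<Longrightarrow> ideal_mult scale I N \<subseteq> N"
  unfolding ideal_mult_def by (rule span_minimal) (auto intro: subspace_scale)

lemma ideal_mult_mono: "I \<subseteq> J \<Longrightarrow> N \<subseteq> K \<Longrightarrow> ideal_mult scale I N \<subseteq> ideal_mult scale J K"
  unfolding ideal_mult_def by (rule span_mono) blast

lemma scale_in_ideal_mult: "a \<in> I \<Longrightarrow> n \<in> N \<Longrightarrow> a *s n \<in> ideal_mult scale I N"
  unfolding ideal_mult_def by (rule span_base) blast

lemma ideal_mult_eq_0_iff: "ideal_mult scale I N = {0} \<longleftrightarrow> N \<subseteq> ann_M scale I"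
proof
  assume "ideal_mult scale I N = {0}"
  then show "N \<subseteq> ann_M scale I"
    using scale_in_ideal_mult unfolding ann_M_def by blast
next
  assume "N \<subseteq> ann_M scale I"
  then have "ideal_mult scale I N \<subseteq> {0}"
    unfolding ideal_mult_def by (intro span_minimal) (auto simp: ann_M_def)
  then show "ideal_mult scale I N = {0}"
    using span_zero unfolding ideal_mult_def by blast
qed

lemma simple_sub_subset:
  assumes "simple_sub scale S" and "subspace K" and "y \<in> S" "y \<in> K" "y \<noteq> 0"
  shows "S \<subseteq> K"
proof -
  have "S \<inter> K = {0} \<or> S \<inter> K = S"
    using assms(1,2) subspace_inter unfolding simple_sub_def by blast
  with assms(3-5) show ?thesis by blast
qed

lemma ann_M_divisible:
  assumes "maximal_ideal P" and "y \<in> ann_M scale P" and "r \<notin> P"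
  shows "\<exists>s. y = r *s (s *s y)"
proof -
  obtain s where "1 - r * s \<in> P" using assms(1,3) unfolding maximal_ideal_def by blast
  with assms(2) have "(1 - r * s) *s y = 0" by (simp add: ann_M_def)
  then show ?thesis by (auto simp: scale_left_diff_distrib)
qed

lemma ann_singleton_eq_maximal_ideal:
  assumes P: "maximal_ideal P" and y: "y \<in> ann_M scale P" "y \<noteq> 0"
  shows "ann scale {y} = P"
proof
  show "P \<subseteq> ann scale {y}" using y(1) by (auto simp: ann_def ann_M_def)
  show "ann scale {y} \<subseteq> P"
  proof
    fix r assume "r \<in> ann scale {y}"
    then have ry: "r *s y = 0" by (simp add: ann_def)
    show "r \<in> P"
    proof (rule ccontr)
      assume "r \<notin> P"
      then obtain s where "y = r *s (s *s y)" using ann_M_divisible[OF P y(1)] by blast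
      also have "\<dots> = s *s (r *s y)" by (rule scale_left_commute)
      finally show False using ry y(2) by simp
    qed
  qed
qed

lemma maximal_ideal_eq_if_ann_M_meet:
  assumes "maximal_ideal P" "maximal_ideal Q"
    and "y \<in> ann_M scale P" "y \<in> ann_M scale Q" "y \<noteq> 0"
  shows "P = Q"
  using ann_singleton_eq_maximal_ideal assms by metis

lemma ideal_mult_eq_if_not_subset:
  assumes "maximal_ideal P" and N: "subspace N" "N \<subseteq> ann_M scale P" and "\<not> I \<subseteq> P"
  shows "ideal_mult scale I N = N"
proof
  show "ideal_mult scale I N \<subseteq> N" using N(1) by (rule ideal_mult_subset)
  obtain a where a: "a \<in> I" "a \<notin> P" using assms(4) by blast
  show "N \<subseteq> ideal_mult scale I N"
  proof
    fix n assume n: "n \<in> N"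
    then obtain s where "n = a *s (s *s n)" using ann_M_divisible assms(1) N(2) a(2) by blast
    moreover have "s *s n \<in> N" using N(1) n by (rule subspace_scale)
    ultimately show "n \<in> ideal_mult scale I N" using scale_in_ideal_mult[OF a(1)] by metis
  qed
qed

lemma second_sub_if_subset_ann_M:
  assumes P: "maximal_ideal P" and N: "subspace N" "N \<noteq> {0}" "N \<subseteq> ann_M scale P"
  shows "second_sub scale N"
  unfolding second_sub_def
proof (intro conjI allI impI N(1,2))
  fix I :: "'a set"
  show "ideal_mult scale I N = N \<or> ideal_mult scale I N = {0}"
  proof (cases "I \<subseteq> P")
    case True
    with N(3) have "N \<subseteq> ann_M scale I" by (auto simp: ann_M_def)
    then show ?thesis by (simp add: ideal_mult_eq_0_iff)
  next
    case False
    with P N show ?thesis by (simp add: ideal_mult_eq_if_not_subset)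
  qed
qed

lemma ann_antimono: "A \<subseteq> B \<Longrightarrow> ann scale B \<subseteq> ann scale A"
  by (auto simp: ann_def)

lemma subspace_vimage_scale:
  assumes N: "subspace N"
  shows "subspace {m. r *s m \<in> N}"
proof (rule subspaceI)
  show "0 \<in> {m. r *s m \<in> N}" using subspace_0[OF N] by simp
  show "x + y \<in> {m. r *s m \<in> N}" if "x \<in> {m. r *s m \<in> N}" "y \<in> {m. r *s m \<in> N}" for x y
    using that subspace_add[OF N] by (simp add: scale_right_distrib)
  show "c *s x \<in> {m. r *s m \<in> N}" if "x \<in> {m. r *s m \<in> N}" for c x
    using that subspace_scale[OF N, of "r *s x" c] by (simp add: mult.commute)
qed

context
  assumes semisimple: "semisimple_module scale"
begin

lemma exists_complement:
  assumes "subspace N"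
  shows "\<exists>L. subspace L \<and> N \<inter> L = {0} \<and> (\<forall>z. \<exists>x\<in>N. \<exists>y\<in>L. z = x + y)"
proof -
  obtain L where L: "subspace L" "N \<inter> L = {0}" "{x + y | x y. x \<in> N \<and> y \<in> L} = UNIV"
    using semisimple[unfolded semisimple_module_def, rule_format, OF assms] by (elim exE conjE)
  have "\<exists>x\<in>N. \<exists>y\<in>L. z = x + y" for z
  proof -
    have "z \<in> {x + y | x y. x \<in> N \<and> y \<in> L}" using L(3) by simp
    then show ?thesis by blast
  qed
  with L(1,2) show ?thesis by blast
qed

lemma exists_scale_in_ann_M:
  assumes "x \<noteq> 0"
  shows "\<exists>P r. maximal_ideal P \<and> r *s x \<noteq> 0 \<and> r *s x \<in> ann_M scale P"
proof -
  have "1 \<notin> ann scale {x}" using assms by (simp add: ann_def)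
  then obtain P where P: "maximal_ideal P" "ann scale {x} \<subseteq> P"
    using exists_maximal_ideal_superset[OF is_ideal_ann] by blast
  then have P_ideal: "is_ideal P" by (simp add: maximal_ideal_def)
  let ?Px = "{p *s x | p. p \<in> P}"
  obtain C where C: "subspace C" "?Px \<inter> C = {0}" "\<forall>z. \<exists>a\<in>?Px. \<exists>b\<in>C. z = a + b"
    using exists_complement[OF subspace_scale_multiples[OF P_ideal, of x]] by blast
  then obtain p0 c where p0: "p0 \<in> P" and c: "c \<in> C" "x = p0 *s x + c" by blast
  have "(1 - p0) *s x = x - p0 *s x" by (simp add: scale_left_diff_distrib)
  also have "\<dots> = c" using c(2) by (metis add_diff_cancel_left')
  finally have c_eq: "c = (1 - p0) *s x" ..
  have "(1 - p0) *s x \<noteq> 0"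
  proof
    assume "(1 - p0) *s x = 0"
    then have "1 - p0 \<in> P" using P(2) by (auto simp: ann_def)
    with p0 P_ideal have "(1 - p0) + p0 \<in> P" unfolding is_ideal_def by blast
    with P(1) show False by (simp add: maximal_ideal_def)
  qed
  moreover have "(1 - p0) *s x \<in> ann_M scale P"
    unfolding ann_M_def
  proof safe
    fix q assume "q \<in> P"
    with P_ideal have "q * (1 - p0) \<in> P" unfolding is_ideal_def by (metis mult.commute)
    then have "q *s ((1 - p0) *s x) \<in> ?Px" by auto
    moreover have "q *s c \<in> C" using C(1) c(1) by (rule subspace_scale)
    ultimately show "q *s ((1 - p0) *s x) = 0" using C(2) c_eq by blast
  qed
  ultimately show ?thesis using P(1) by blast
qed

lemma exists_nonzero_in_ann_M:
  assumes N: "subspace N" "N \<noteq> {0}"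
  obtains P y where "maximal_ideal P" "y \<in> N" "y \<noteq> 0" "y \<in> ann_M scale P"
proof -
  obtain x where x: "x \<in> N" "x \<noteq> 0" using N(2) subspace_0[OF N(1)] by auto
  obtain P r where P: "maximal_ideal P" "r *s x \<noteq> 0" "r *s x \<in> ann_M scale P"
    using exists_scale_in_ann_M[OF x(2)] by blast
  have "r *s x \<in> N" using N(1) x(1) by (rule subspace_scale)
  from that[OF P(1) this P(2,3)] show ?thesis .
qed

lemma subset_span_ann_M_Int:
  assumes K: "subspace K"
  shows "K \<subseteq> span (\<Union>{K \<inter> ann_M scale P | P. maximal_ideal P})"
proof
  let ?T = "span (\<Union>{K \<inter> ann_M scale P | P. maximal_ideal P})"
  have TK: "?T \<subseteq> K" using K by (intro span_minimal) auto
  obtain C where C: "subspace C" "?T \<inter> C = {0}" "\<forall>z. \<exists>a\<in>?T. \<exists>b\<in>C. z = a + b"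
    using exists_complement[of ?T] by blast
  fix x assume x: "x \<in> K"
  obtain t c where tc: "t \<in> ?T" "c \<in> C" "x = t + c" using C(3) by blast
  have "t \<in> K" using TK tc(1) by blast
  moreover have "c = x - t" using tc(3) by simp
  ultimately have "c \<in> K" using subspace_diff[OF K x] by simp
  have "K \<inter> C = {0}"
  proof (rule ccontr)
    assume "K \<inter> C \<noteq> {0}"
    then obtain P y where P: "maximal_ideal P" and y: "y \<in> K \<inter> C" "y \<noteq> 0" "y \<in> ann_M scale P"
      by (rule exists_nonzero_in_ann_M[OF subspace_inter[OF K C(1)]])
    from P y have "y \<in> \<Union>{K \<inter> ann_M scale P | P. maximal_ideal P}" by blast
    then have "y \<in> ?T" by (rule span_base)
    with y(1,2) C(2) show False by blast
  qed
  with \<open>c \<in> K\<close> tc(2) have "c = 0" by blast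
  with tc show "x \<in> ?T" by simp
qed

lemma span_ann_M_eq_UNIV: "span (\<Union>{ann_M scale P | P. maximal_ideal P}) = UNIV"
proof -
  have "UNIV \<subseteq> span (\<Union>{UNIV \<inter> ann_M scale P | P. maximal_ideal P})"
    by (rule subset_span_ann_M_Int[OF subspace_UNIV])
  then have "UNIV \<subseteq> span (\<Union>{ann_M scale P | P. maximal_ideal P})"
    by (simp only: Int_UNIV_left)
  then show ?thesis by blast
qed

lemma ann_if_kills_components:
  assumes K: "subspace K" and rQ: "r \<in> ann scale (K \<inter> ann_M scale Q)"
    and r: "r \<in> ann scale (\<Union>{ann_M scale Q' | Q'. maximal_ideal Q' \<and> Q' \<noteq> Q})"
  shows "r \<in> ann scale K"
proof -
  have "r \<in> ann scale (\<Union>{K \<inter> ann_M scale Q' | Q'. maximal_ideal Q'})"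
    unfolding ann_def
  proof (intro CollectI ballI)
    fix z assume "z \<in> \<Union>{K \<inter> ann_M scale Q' | Q'. maximal_ideal Q'}"
    then obtain Q' where Q': "maximal_ideal Q'" and z: "z \<in> K" "z \<in> ann_M scale Q'" by blast
    show "r *s z = 0"
    proof (cases "Q' = Q")
      case True
      with z rQ show ?thesis by (simp add: ann_def)
    next
      case False
      with Q' z(2) r show ?thesis unfolding ann_def by blast
    qed
  qed
  also have "\<dots> = ann scale (span (\<Union>{K \<inter> ann_M scale Q' | Q'. maximal_ideal Q'}))"
    by (rule ann_span[symmetric])
  also have "\<dots> \<subseteq> ann scale K"
    by (rule ann_antimono[OF subset_span_ann_M_Int[OF K]])
  finally show ?thesis .
qed

lemma ideal_mult_ann_components_not_subset:
  assumes N: "subspace N"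
  shows "ideal_mult scale (ann scale (\<Union>{ann_M scale Q | Q. maximal_ideal Q \<and> \<not> ann_M scale Q \<subseteq> N})) UNIV
    \<subseteq> N"
  unfolding ideal_mult_def
proof (rule span_minimal[OF _ N], safe)
  fix r m assume r: "r \<in> ann scale (\<Union>{ann_M scale Q | Q. maximal_ideal Q \<and> \<not> ann_M scale Q \<subseteq> N})"
  have "\<Union>{ann_M scale Q | Q. maximal_ideal Q} \<subseteq> {m. r *s m \<in> N}"
  proof safe
    fix z Q assume Q: "maximal_ideal Q" and z: "z \<in> ann_M scale Q"
    show "r *s z \<in> N"
    proof (cases "ann_M scale Q \<subseteq> N")
      case True
      then show ?thesis using subspace_scale[OF subspace_ann_M z] by blast
    next
      case False
      with r Q z have "r *s z = 0" unfolding ann_def by blast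
      then show ?thesis using subspace_0[OF N] by simp
    qed
  qed
  then have "span (\<Union>{ann_M scale Q | Q. maximal_ideal Q}) \<subseteq> {m. r *s m \<in> N}"
    by (rule span_minimal[OF _ subspace_vimage_scale[OF N]])
  then show "r *s m \<in> N" using span_ann_M_eq_UNIV by blast
qed

lemma ann_M_Int_ideal_mult:
  assumes y: "y \<in> ann_M scale P" "y \<in> ideal_mult scale P UNIV"
  shows "y = 0"
proof -
  obtain E where E: "subspace E" "span {y} \<inter> E = {0}" "\<forall>z. \<exists>a\<in>span {y}. \<exists>b\<in>E. z = a + b"
    using exists_complement[of "span {y}"] by blast
  have span_y: "span {y} \<subseteq> ann_M scale P"
    using y(1) by (intro span_minimal subspace_ann_M) simp
  have "ideal_mult scale P UNIV \<subseteq> E"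
    unfolding ideal_mult_def
  proof (rule span_minimal[OF _ E(1)], safe)
    fix a n assume a: "a \<in> P"
    obtain w e where w: "w \<in> span {y}" and e: "e \<in> E" and n: "n = w + e"
      using E(3)[rule_format, of n] by blast
    have "a *s w = 0" using a w span_y by (auto simp: ann_M_def)
    then have "a *s n = a *s e" using n by (simp add: scale_right_distrib)
    then show "a *s n \<in> E" using subspace_scale[OF E(1) e] by simp
  qed
  with y(2) have "y \<in> E" by blast
  moreover have "y \<in> span {y}" by (rule span_base) simp
  ultimately have "y \<in> span {y} \<inter> E" by blast
  then show ?thesis unfolding E(2) by simp
qed

lemma decompose_ideal_mult_ann_M:
  assumes L: "subspace L" "l \<in> L"
  obtains a d where "a \<in> ideal_mult scale P L" "d \<in> L" "d \<in> ann_M scale P" "l = a + d"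
proof -
  obtain D where D: "subspace D" "ideal_mult scale P L \<inter> D = {0}"
     "\<forall>z. \<exists>a\<in>ideal_mult scale P L. \<exists>b\<in>D. z = a + b"
    using exists_complement[of "ideal_mult scale P L"] by blast
  obtain a d where ad: "a \<in> ideal_mult scale P L" "d \<in> D" "l = a + d" using D(3) by blast
  have "a \<in> L" using ad(1) ideal_mult_subset[OF L(1)] by blast
  moreover have "d = l - a" using ad(3) by simp
  ultimately have dL: "d \<in> L" using subspace_diff[OF L] by simp
  have d_ann: "d \<in> ann_M scale P" unfolding ann_M_def
  proof safe
    fix p assume "p \<in> P"
    then have "p *s d \<in> ideal_mult scale P L" using dL by (rule scale_in_ideal_mult)
    moreover have "p *s d \<in> D" using D(1) ad(2) by (rule subspace_scale)
    ultimately show "p *s d = 0" using D(2) by blast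
  qed
  show ?thesis by (rule that[OF ad(1) dL d_ann ad(3)])
qed

lemma second_sub_subset_ann_M:
  assumes N: "second_sub scale N"
  obtains P where "maximal_ideal P" "N \<subseteq> ann_M scale P"
proof -
  have N_sub: "subspace N" "N \<noteq> {0}"
    and N_second: "\<And>I. is_ideal I \<Longrightarrow> ideal_mult scale I N = N \<or> ideal_mult scale I N = {0}"
    using N unfolding second_sub_def by auto
  obtain P y where P: "maximal_ideal P" and y: "y \<in> N" "y \<noteq> 0" "y \<in> ann_M scale P"
    using exists_nonzero_in_ann_M[OF N_sub] by blast
  have "ideal_mult scale P N \<noteq> N"
  proof
    assume "ideal_mult scale P N = N"
    then have "y \<in> ideal_mult scale P UNIV" using y(1) ideal_mult_mono[of P P N UNIV] by blast
    with y(2,3) show False using ann_M_Int_ideal_mult by blast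
  qed
  with N_second P have "ideal_mult scale P N = {0}" by (auto simp: maximal_ideal_def)
  with P show ?thesis by (simp add: ideal_mult_eq_0_iff that)
qed

lemma ps_hollow_if_second_sub:
  assumes N: "second_sub scale N"
  shows "ps_hollow scale N"
proof -
  obtain P where P: "maximal_ideal P" "N \<subseteq> ann_M scale P"
    using second_sub_subset_ann_M[OF N] by blast
  have N_sub: "subspace N" "N \<noteq> {0}" using N unfolding second_sub_def by auto
  show ?thesis unfolding ps_hollow_def
  proof (intro conjI allI impI N_sub)
    fix I L assume L: "subspace L"
      and N_IL: "N \<subseteq> {x + y | x y. x \<in> ideal_mult scale I UNIV \<and> y \<in> L}"
    show "N \<subseteq> ideal_mult scale I UNIV \<or> N \<subseteq> L"
    proof (cases "I \<subseteq> P")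
      case False
      with P N_sub have "N = ideal_mult scale I N" by (simp add: ideal_mult_eq_if_not_subset)
      also have "\<dots> \<subseteq> ideal_mult scale I UNIV" by (rule ideal_mult_mono) auto
      finally show ?thesis ..
    next
      case True
      have "n \<in> L" if n: "n \<in> N" for n
      proof -
        obtain u l where u: "u \<in> ideal_mult scale I UNIV" and l: "l \<in> L" and "n = u + l"
          using N_IL n by blast
        obtain a d where a: "a \<in> ideal_mult scale P L" and d: "d \<in> L" "d \<in> ann_M scale P"
          and "l = a + d"
          using decompose_ideal_mult_ann_M[OF L l] by blast
        have "u + a \<in> ideal_mult scale P UNIV"
          using ideal_mult_mono[OF True, of UNIV UNIV] ideal_mult_mono[of P P L UNIV] u a
          by (auto intro: subspace_add[OF subspace_ideal_mult])
        moreover have "u + a = n - d" using \<open>n = u + l\<close> \<open>l = a + d\<close> by simp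
        moreover have "n - d \<in> ann_M scale P"
          using P(2) n d(2) by (auto intro: subspace_diff[OF subspace_ann_M])
        ultimately have "n = d" using ann_M_Int_ideal_mult by force
        with d(1) show ?thesis by simp
      qed
      then show ?thesis by blast
    qed
  qed
qed

lemma second_sub_if_ps_hollow:
  assumes N: "ps_hollow scale N"
  shows "second_sub scale N"
proof -
  have N_sub: "subspace N" "N \<noteq> {0}"
    and N_ps: "\<And>I L. is_ideal I \<Longrightarrow> subspace L \<Longrightarrow>
        N \<subseteq> {x + y | x y. x \<in> ideal_mult scale I UNIV \<and> y \<in> L} \<Longrightarrow>
        N \<subseteq> ideal_mult scale I UNIV \<or> N \<subseteq> L"
    using N unfolding ps_hollow_def by auto
  obtain P y where P: "maximal_ideal P" and y: "y \<in> N" "y \<noteq> 0" "y \<in> ann_M scale P"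
    using exists_nonzero_in_ann_M[OF N_sub] by blast
  have "N \<subseteq> {x + y | x y. x \<in> ideal_mult scale P UNIV \<and> y \<in> ann_M scale P}"
  proof
    fix n assume "n \<in> N"
    obtain a d where "a \<in> ideal_mult scale P UNIV" "d \<in> ann_M scale P" "n = a + d"
      using decompose_ideal_mult_ann_M[OF subspace_UNIV, of n P] by blast
    then show "n \<in> {x + y | x y. x \<in> ideal_mult scale P UNIV \<and> y \<in> ann_M scale P}" by blast
  qed
  then have "N \<subseteq> ideal_mult scale P UNIV \<or> N \<subseteq> ann_M scale P"
    using N_ps P subspace_ann_M by (simp add: maximal_ideal_def)
  moreover have "\<not> N \<subseteq> ideal_mult scale P UNIV"
    using ann_M_Int_ideal_mult[OF y(3)] y(1,2) by blast
  ultimately show ?thesis using P N_sub second_sub_if_subset_ann_M by blast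
qed

lemma simple_sub_if_multiplication:
  assumes mult: "multiplication_module scale" and N: "second_sub scale N"
  shows "simple_sub scale N"
proof -
  obtain P where P: "maximal_ideal P" "N \<subseteq> ann_M scale P"
    using second_sub_subset_ann_M[OF N] by blast
  have N_sub: "subspace N" "N \<noteq> {0}" using N unfolding second_sub_def by auto
  show ?thesis unfolding simple_sub_def
  proof (intro conjI allI impI N_sub)
    fix L assume L: "subspace L \<and> L \<subseteq> N"
    then obtain I where I: "L = ideal_mult scale I UNIV"
      using mult unfolding multiplication_module_def by blast
    show "L = {0} \<or> L = N"
    proof (cases "I \<subseteq> P")
      case True
      then have "L \<subseteq> ideal_mult scale P UNIV \<inter> ann_M scale P"
        using I L P(2) ideal_mult_mono[OF True, of UNIV UNIV] by blast
      then have "L \<subseteq> {0}" using ann_M_Int_ideal_mult by blast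
      then show ?thesis using subspace_0[of L] L by blast
    next
      case False
      with P N_sub have "N = ideal_mult scale I N" by (simp add: ideal_mult_eq_if_not_subset)
      also have "\<dots> \<subseteq> L" unfolding I by (rule ideal_mult_mono) auto
      finally show ?thesis using L by blast
    qed
  qed
qed

lemma simple_sub_if_comultiplication:
  assumes comult: "comultiplication_module scale" and N: "second_sub scale N"
  shows "simple_sub scale N"
proof -
  obtain P where P: "maximal_ideal P" "N \<subseteq> ann_M scale P"
    using second_sub_subset_ann_M[OF N] by blast
  have N_sub: "subspace N" "N \<noteq> {0}" using N unfolding second_sub_def by auto
  show ?thesis unfolding simple_sub_def
  proof (intro conjI allI impI N_sub)
    fix L assume L: "subspace L \<and> L \<subseteq> N"
    show "L = {0} \<or> L = N"
    proof (cases "L = {0}")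
      case False
      then obtain l where l: "l \<in> L" "l \<noteq> 0" using subspace_0[of L] L by auto
      then have "ann scale L \<subseteq> ann scale {l}" by (auto simp: ann_def)
      also have "\<dots> = P" using l L P by (intro ann_singleton_eq_maximal_ideal) auto
      finally have "ann_M scale P \<subseteq> ann_M scale (ann scale L)" by (auto simp: ann_M_def)
      moreover have "L = ann_M scale (ann scale L)"
        using comult L unfolding comultiplication_module_def by blast
      ultimately show ?thesis using L P(2) by blast
    qed simp
  qed
qed

lemma max_second_sub_ann_M:
  assumes P: "maximal_ideal P" and P0: "ann_M scale P \<noteq> {0}"
  shows "max_second_sub scale (ann_M scale P)"
  unfolding max_second_sub_def
proof (intro conjI allI impI)
  show "second_sub scale (ann_M scale P)"
    using second_sub_if_subset_ann_M[OF P subspace_ann_M P0] by simp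
  fix K assume K: "second_sub scale K \<and> ann_M scale P \<subseteq> K"
  then obtain Q where Q: "maximal_ideal Q" "K \<subseteq> ann_M scale Q"
    using second_sub_subset_ann_M by blast
  obtain y where y: "y \<in> ann_M scale P" "y \<noteq> 0" using P0 subspace_0[OF subspace_ann_M] by auto
  with K Q have "P = Q" by (intro maximal_ideal_eq_if_ann_M_meet[OF P Q(1)]) auto
  with K Q(2) show "K = ann_M scale P" by blast
qed

context
  assumes ann_separates: "\<forall>N. max_second_sub scale N \<longrightarrow>
    ann scale UNIV \<noteq> \<Inter> {ann scale K | K. max_second_sub scale K \<and> K \<noteq> N}"
begin

lemma exists_separating_scalar:
  assumes P: "maximal_ideal P" and P0: "ann_M scale P \<noteq> {0}"
  obtains r where "r \<notin> P" "r \<in> ann scale (\<Union>{ann_M scale Q | Q. maximal_ideal Q \<and> Q \<noteq> P})"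
proof -
  let ?S = "{ann scale K | K. max_second_sub scale K \<and> K \<noteq> ann_M scale P}"
  have "ann scale UNIV \<noteq> \<Inter>?S"
    using ann_separates max_second_sub_ann_M[OF P P0] by simp
  moreover have "ann scale UNIV \<subseteq> \<Inter>?S" by (auto simp: ann_def)
  ultimately obtain r where r: "r \<in> \<Inter>?S" "r \<notin> ann scale UNIV" by blast
  have r_others: "r \<in> ann scale (\<Union>{ann_M scale Q | Q. maximal_ideal Q \<and> Q \<noteq> P})"
    unfolding ann_def
  proof (intro CollectI ballI)
    fix z assume "z \<in> \<Union>{ann_M scale Q | Q. maximal_ideal Q \<and> Q \<noteq> P}"
    then obtain Q where Q: "maximal_ideal Q" "Q \<noteq> P" and z: "z \<in> ann_M scale Q" by blast
    show "r *s z = 0"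
    proof (cases "z = 0")
      case False
      have "ann_M scale Q \<noteq> ann_M scale P"
        using maximal_ideal_eq_if_ann_M_meet[OF P Q(1) _ z False] Q(2) z by auto
      moreover have "max_second_sub scale (ann_M scale Q)"
        using max_second_sub_ann_M[OF Q(1)] z False by blast
      ultimately have "r \<in> ann scale (ann_M scale Q)" using r(1) by blast
      with z show ?thesis by (simp add: ann_def)
    qed simp
  qed
  have "r \<notin> P"
  proof
    assume "r \<in> P"
    then have "r \<in> ann scale (UNIV \<inter> ann_M scale P)" by (simp add: ann_def ann_M_def)
    then have "r \<in> ann scale UNIV" by (rule ann_if_kills_components[OF subspace_UNIV _ r_others])
    with r(2) show False ..
  qed
  from that[OF this r_others] show ?thesis .
qed

lemma comultiplication_if_second_subs_simple:
  assumes simple: "\<forall>N. second_sub scale N \<longrightarrow> simple_sub scale N"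
  shows "comultiplication_module scale"
  unfolding comultiplication_module_def
proof (intro allI impI)
  fix K assume K: "subspace K"
  let ?A = "ann_M scale (ann scale K)"
  have "?A \<subseteq> span (\<Union>{?A \<inter> ann_M scale Q | Q. maximal_ideal Q})"
    by (rule subset_span_ann_M_Int[OF subspace_ann_M])
  also have "\<dots> \<subseteq> K"
  proof (rule span_minimal[OF _ K], safe)
    fix y Q assume Q: "maximal_ideal Q" and yA: "y \<in> ?A" and yQ: "y \<in> ann_M scale Q"
    show "y \<in> K"
    proof (rule ccontr)
      assume "y \<notin> K"
      then have "y \<noteq> 0" using subspace_0[OF K] by blast
      then have "simple_sub scale (ann_M scale Q)"
        using simple second_sub_if_subset_ann_M[OF Q subspace_ann_M] yQ by blast
      then have KQ: "K \<inter> ann_M scale Q \<subseteq> {0}"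
        using simple_sub_subset[OF _ K] yQ \<open>y \<notin> K\<close> by blast
      obtain r where r: "r \<notin> Q" "r \<in> ann scale (\<Union>{ann_M scale Q' | Q'. maximal_ideal Q' \<and> Q' \<noteq> Q})"
        using exists_separating_scalar[OF Q] yQ \<open>y \<noteq> 0\<close> by blast
      have "r \<in> ann scale (K \<inter> ann_M scale Q)" using KQ by (auto simp: ann_def)
      then have "r \<in> ann scale K" by (rule ann_if_kills_components[OF K _ r(2)])
      then have "r \<in> ann scale {y}" using yA by (simp add: ann_def ann_M_def)
      with r(1) show False using ann_singleton_eq_maximal_ideal[OF Q yQ \<open>y \<noteq> 0\<close>] by simp
    qed
  qed
  finally have "?A \<subseteq> K" .
  moreover have "K \<subseteq> ?A" by (auto simp: ann_M_def ann_def)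
  ultimately show "K = ?A" by blast
qed

lemma multiplication_if_second_subs_simple:
  assumes simple: "\<forall>N. second_sub scale N \<longrightarrow> simple_sub scale N"
  shows "multiplication_module scale"
  unfolding multiplication_module_def
proof (intro allI impI)
  fix N assume N: "subspace N"
  define I where "I = ann scale (\<Union>{ann_M scale Q | Q. maximal_ideal Q \<and> \<not> ann_M scale Q \<subseteq> N})"
  have "N \<subseteq> span (\<Union>{N \<inter> ann_M scale Q | Q. maximal_ideal Q})"
    by (rule subset_span_ann_M_Int[OF N])
  also have "\<dots> \<subseteq> ideal_mult scale I UNIV"
  proof (rule span_minimal[OF _ subspace_ideal_mult], safe)
    fix y Q assume Q: "maximal_ideal Q" and y: "y \<in> N" "y \<in> ann_M scale Q"
    show "y \<in> ideal_mult scale I UNIV"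
    proof (cases "y = 0")
      case False
      then have "simple_sub scale (ann_M scale Q)"
        using simple second_sub_if_subset_ann_M[OF Q subspace_ann_M] y(2) by blast
      then have QN: "ann_M scale Q \<subseteq> N" using simple_sub_subset N y False by blast
      obtain r where r: "r \<notin> Q" "r \<in> ann scale (\<Union>{ann_M scale Q' | Q'. maximal_ideal Q' \<and> Q' \<noteq> Q})"
        using exists_separating_scalar[OF Q] y(2) False by blast
      have "r \<in> I" unfolding I_def using r(2) QN by (auto simp: ann_def)
      moreover obtain s where "y = r *s (s *s y)" using ann_M_divisible[OF Q y(2) r(1)] by blast
      ultimately show ?thesis using scale_in_ideal_mult[of r I "s *s y" UNIV] by simp
    qed (simp add: span_zero ideal_mult_def)
  qed
  finally have "N \<subseteq> ideal_mult scale I UNIV" .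
  moreover have "ideal_mult scale I UNIV \<subseteq> N"
    unfolding I_def by (rule ideal_mult_ann_components_not_subset[OF N])
  moreover have "is_ideal I" unfolding I_def by (rule is_ideal_ann)
  ultimately show "\<exists>I. is_ideal I \<and> N = ideal_mult scale I UNIV" by blast
qed

end

end

end

theorem theorem5p17:
  fixes scale :: "'r::comm_ring_1 \<Rightarrow> 'm::ab_group_add \<Rightarrow> 'm"
  assumes "module scale"
    and "semisimple_module scale"
    and "\<forall>N. max_second_sub scale N \<longrightarrow>
           ann scale UNIV \<noteq> \<Inter> {ann scale K | K. max_second_sub scale K \<and> K \<noteq> N}"
  shows "(multiplication_module scale \<longleftrightarrow> (\<forall>N. ps_hollow scale N \<longrightarrow> simple_sub scale N))
       \<and> ((\<forall>N. ps_hollow scale N \<longrightarrow> simple_sub scale N) \<longleftrightarrow> (\<forall>N. second_sub scale N \<longrightarrow> simple_sub scale N))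
       \<and> ((\<forall>N. second_sub scale N \<longrightarrow> simple_sub scale N) \<longleftrightarrow> comultiplication_module scale)"
proof -
  interpret module scale by fact
  have ps_hollow_iff: "ps_hollow scale N \<longleftrightarrow> second_sub scale N" for N
    using ps_hollow_if_second_sub[OF assms(2)] second_sub_if_ps_hollow[OF assms(2)] by blast
  have "multiplication_module scale \<longleftrightarrow> (\<forall>N. second_sub scale N \<longrightarrow> simple_sub scale N)"
    using simple_sub_if_multiplication[OF assms(2)]
      multiplication_if_second_subs_simple[OF assms(2,3)] by blast
  moreover have "comultiplication_module scale \<longleftrightarrow> (\<forall>N. second_sub scale N \<longrightarrow> simple_sub scale N)"
    using simple_sub_if_comultiplication[OF assms(2)]
      comultiplication_if_second_subs_simple[OF assms(2,3)] by blast
  ultimately show ?thesis by (simp add: ps_hollow_iff)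
qed

end
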